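(* For every integer $k\geq 6$ and every integer $t$ with $(k-1)(k-2)+1\leq t\leq k(k-1)$, we have $rx_3(K_{2,t})=k$.
   Context: An edge coloring of a graph $G$ is any assignment of colors to the edges (adjacent edges may receive the same color). A tree $T$ in an edge-colored graph is a rainbow tree if no two edges of $T$ have the same color. For $S\subseteq V(G)$, an $S$-tree is a subtree of $G$ containing all vertices of $S$. A $3$-rainbow coloring of $G$ is an edge coloring such that for every set $S$ of $3$ vertices of $G$ there is a rainbow $S$-tree in $G$. The $3$-rainbow index $rx_3(G)$ is the minimum number of colors in a $3$-rainbow coloring of $G$. $K_{2,t}$ denotes the complete bipartite graph with parts of sizes $2$ and $t$. *)

theory Defs
  imports Main
begin

definition simple_graph :: "'a set \<Rightarrow> 'a set set \<Rightarrow> bool" where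
  "simple_graph V E \<longleftrightarrow> finite V \<and> (\<forall>e\<in>E. e \<subseteq> V \<and> card e = 2)"

definition is_subgraph :: "'a set \<Rightarrow> 'a set set \<Rightarrow> 'a set \<Rightarrow> 'a set set \<Rightarrow> bool" where
  "is_subgraph VT ET V E \<longleftrightarrow> VT \<subseteq> V \<and> ET \<subseteq> E \<and> (\<forall>e\<in>ET. e \<subseteq> VT)"

definition connected_graph :: "'a set \<Rightarrow> 'a set set \<Rightarrow> bool" where
  "connected_graph VT ET \<longleftrightarrow>
     (\<forall>x\<in>VT. \<forall>y\<in>VT. (\<lambda>a b. {a, b} \<in> ET)\<^sup>*\<^sup>* x y)"

definition has_cycle :: "'a set set \<Rightarrow> bool" where
  "has_cycle ET \<longleftrightarrow> (\<exists>vs. length vs \<ge> 3 \<and> distinct vs \<and>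
     (\<forall>i < length vs. {vs ! i, vs ! ((i + 1) mod length vs)} \<in> ET))"

definition is_tree :: "'a set \<Rightarrow> 'a set set \<Rightarrow> bool" where
  "is_tree VT ET \<longleftrightarrow> VT \<noteq> {} \<and> connected_graph VT ET \<and> \<not> has_cycle ET"

definition is_S_tree :: "'a set \<Rightarrow> 'a set set \<Rightarrow> 'a set \<Rightarrow> 'a set \<Rightarrow> 'a set set \<Rightarrow> bool" where
  "is_S_tree V E S VT ET \<longleftrightarrow> is_subgraph VT ET V E \<and> is_tree VT ET \<and> S \<subseteq> VT"

definition rainbow :: "('a set \<Rightarrow> nat) \<Rightarrow> 'a set set \<Rightarrow> bool" where
  "rainbow c ET \<longleftrightarrow> inj_on c ET"

definition three_rainbow_coloring :: "'a set \<Rightarrow> 'a set set \<Rightarrow> ('a set \<Rightarrow> nat) \<Rightarrow> bool" where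
  "three_rainbow_coloring V E c \<longleftrightarrow>
     (\<forall>S. S \<subseteq> V \<and> card S = 3 \<longrightarrow>
        (\<exists>VT ET. is_S_tree V E S VT ET \<and> rainbow c ET))"

definition rx3 :: "'a set \<Rightarrow> 'a set set \<Rightarrow> nat" where
  "rx3 V E = (LEAST n. \<exists>c. three_rainbow_coloring V E c \<and> card (c ` E) = n)"

definition K2t_V :: "nat \<Rightarrow> (nat + nat) set" where
  "K2t_V t = {Inl 0, Inl 1} \<union> Inr ` {..<t}"

definition K2t_E :: "nat \<Rightarrow> (nat + nat) set set" where
  "K2t_E t = {{Inl i, Inr j} | i j. i < 2 \<and> j < t}"

end

theory Submission
  imports Defs
begin

text \<open>
  Lower bound: in a rainbow tree for three leaves \<open>Inr i\<close>, \<open>Inr j\<close>, \<open>Inr l\<close> each leaf is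
  joined to a hub by its own edge, so the colour sets of the two edges at the three leaves have
  distinct representatives. Hence no pair of colours contains the colour sets of three leaves,
  and counting leaves over the \<open>n choose 2\<close> pairs of colours gives \<open>t \<le> n (n - 1)\<close>.

  Upper bound: label the leaves injectively by \<open>t\<close> ordered pairs of distinct colours from
  \<open>{0..<k}\<close>, including \<open>(0, 1)\<close> and all pairs from \<open>{1..<k}\<close>, and colour the two edges at a
  leaf by the coordinates of its label. For a set \<open>S\<close> of three vertices pick one edge of
  pairwise distinct colour at each leaf of \<open>S\<close>; these use at most three colours, so two colours
  \<open>y \<noteq> z\<close> in \<open>{1..5}\<close> remain free, and the leaf labelled \<open>(y, z)\<close> joins both hubs to
  complete a rainbow \<open>S\<close>-tree.
\<close>

definition distinct_reps3 :: "'a set \<Rightarrow> 'a set \<Rightarrow> 'a set \<Rightarrow> bool" where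
  "distinct_reps3 A B C \<longleftrightarrow> (\<exists>x\<in>A. \<exists>y\<in>B. \<exists>z\<in>C. distinct [x, y, z])"

lemma card_ge_3_obtains:
  assumes "3 \<le> card A"
  obtains x y z where "x \<in> A" "y \<in> A" "z \<in> A" "distinct [x, y, z]"
proof -
  obtain T where "T \<subseteq> A" "card T = 3"
    using obtain_subset_with_card_n[OF assms] by metis
  then show thesis
    using that by (auto simp: card_3_iff)
qed

lemma card_ge_3_if_distinct_reps3:
  assumes "distinct_reps3 A B C" "A \<union> B \<union> C \<subseteq> P" "finite P"
  shows "3 \<le> card P"
proof -
  obtain x y z where "x \<in> A" "y \<in> B" "z \<in> C" "distinct [x, y, z]"
    using assms(1) by (auto simp: distinct_reps3_def)
  then have "card {x, y, z} = 3" "{x, y, z} \<subseteq> P"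
    using assms(2) by auto
  then show ?thesis
    using card_mono[OF assms(3)] by metis
qed

lemma card_le_if_distinct_reps3:
  fixes U :: "'i \<Rightarrow> 'a set"
  assumes I: "finite I" "3 \<le> card I" and C: "finite C"
    and U: "\<And>i. i \<in> I \<Longrightarrow> U i \<subseteq> C \<and> card (U i) \<le> 2"
    and reps: "\<And>i j l. i \<in> I \<Longrightarrow> j \<in> I \<Longrightarrow> l \<in> I \<Longrightarrow> distinct [i, j, l] \<Longrightarrow>
                 distinct_reps3 (U i) (U j) (U l)"
  shows "card I \<le> card C * (card C - 1)"
proof -
  define pairs where "pairs = {P. P \<subseteq> C \<and> card P = 2}"
  have "3 \<le> card C"
  proof -
    obtain i j l where "i \<in> I" "j \<in> I" "l \<in> I" "distinct [i, j, l]"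
      using card_ge_3_obtains[OF I(2)] by metis
    then show ?thesis
      using card_ge_3_if_distinct_reps3[OF reps _ C] U by (meson Un_least)
  qed
  have cover: "I \<subseteq> (\<Union>P\<in>pairs. {i \<in> I. U i \<subseteq> P})"
  proof
    fix i assume "i \<in> I"
    then obtain P where "U i \<subseteq> P" "P \<subseteq> C" "card P = 2"
      using exists_subset_between[of "U i" 2 C] U C \<open>3 \<le> card C\<close> by auto
    then show "i \<in> (\<Union>P\<in>pairs. {i \<in> I. U i \<subseteq> P})"
      using \<open>i \<in> I\<close> by (auto simp: pairs_def)
  qed
  have fibre: "card {i \<in> I. U i \<subseteq> P} \<le> 2" if "P \<in> pairs" for P
  proof (rule ccontr)
    assume "\<not> ?thesis"
    then have "3 \<le> card {i \<in> I. U i \<subseteq> P}"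
      by simp
    then obtain i j l where "i \<in> {i \<in> I. U i \<subseteq> P}" "j \<in> {i \<in> I. U i \<subseteq> P}"
      "l \<in> {i \<in> I. U i \<subseteq> P}" "distinct [i, j, l]"
      by (rule card_ge_3_obtains)
    moreover have "finite P"
      using that C by (auto simp: pairs_def intro: finite_subset)
    ultimately have "3 \<le> card P"
      using card_ge_3_if_distinct_reps3[OF reps] by blast
    then show False
      using that by (simp add: pairs_def)
  qed
  have "finite pairs"
    using C by (simp add: pairs_def)
  have "card I \<le> card (\<Union>P\<in>pairs. {i \<in> I. U i \<subseteq> P})"
    using cover \<open>finite pairs\<close> I(1) by (intro card_mono) auto
  also have "\<dots> \<le> (\<Sum>P\<in>pairs. card {i \<in> I. U i \<subseteq> P})"
    using \<open>finite pairs\<close> by (rule card_UN_le)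
  also have "\<dots> \<le> card pairs * 2"
    using sum_bounded_above[of pairs _ "2::nat"] fibre by simp
  also have "card pairs = card C choose 2"
    unfolding pairs_def using C by (rule n_subsets)
  finally show ?thesis
    by (simp add: choose_two)
qed

lemma distinct_reps3_pairs:
  assumes "distinct [p, q, r]" "fst p \<noteq> snd p" "fst q \<noteq> snd q" "fst r \<noteq> snd r"
  shows "distinct_reps3 {fst p, snd p} {fst q, snd q} {fst r, snd r}"
  using assms by (cases p; cases q; cases r) (auto simp: distinct_reps3_def)

lemma obtain_injective_coordinate_choice:
  fixes p :: "'i \<Rightarrow> 'a \<times> 'a"
  assumes "finite J" "card J \<le> 3" "inj_on p J" "\<forall>j\<in>J. fst (p j) \<noteq> snd (p j)"
  obtains r where "\<forall>j\<in>J. r j \<in> {fst (p j), snd (p j)}" "inj_on r J"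
proof -
  consider "card J \<le> 1" | "card J = 2" | "card J = 3"
    using assms(2) by linarith
  then have "\<exists>r. (\<forall>j\<in>J. r j \<in> {fst (p j), snd (p j)}) \<and> inj_on r J"
  proof cases
    case 1
    then have "inj_on (fst \<circ> p) J"
      using assms(1) by (auto simp: inj_on_def card_le_Suc0_iff_eq)
    then show ?thesis
      by (intro exI[of _ "fst \<circ> p"]) auto
  next
    case 2
    then obtain i j where J: "J = {i, j}" "i \<noteq> j"
      by (auto simp: card_2_iff)
    then consider "fst (p i) \<noteq> fst (p j)" | "snd (p i) \<noteq> snd (p j)"
      using assms(3) by (auto simp: prod_eq_iff)
    then show ?thesis
    proof cases
      case 1
      then show ?thesis
        using J by (intro exI[of _ "fst \<circ> p"]) auto
    next
      case 2
      then show ?thesis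
        using J by (intro exI[of _ "snd \<circ> p"]) auto
    qed
  next
    case 3
    then obtain i j l where J: "J = {i, j, l}" "distinct [i, j, l]"
      by (auto simp: card_3_iff)
    have "distinct [p i, p j, p l]"
      using assms(3) J by (auto simp: inj_on_def)
    then obtain x y z where xyz: "x \<in> {fst (p i), snd (p i)}" "y \<in> {fst (p j), snd (p j)}"
      "z \<in> {fst (p l), snd (p l)}" "distinct [x, y, z]"
      using distinct_reps3_pairs[of "p i" "p j" "p l"] assms(4) J
      unfolding distinct_reps3_def by auto
    define r where "r q = (if q = i then x else if q = j then y else z)" for q
    have "inj_on r J"
      using J xyz(4) by (auto simp: r_def inj_on_def)
    moreover have "\<forall>q\<in>J. r q \<in> {fst (p q), snd (p q)}"
      using J xyz(1-3) by (auto simp: r_def)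
    ultimately show ?thesis
      by blast
  qed
  then show thesis
    using that by blast
qed

lemma card_Times_minus_Id_on:
  assumes "finite A"
  shows "card (A \<times> A - Id_on A) = card A * (card A - 1)"
proof -
  have "Id_on A = (\<lambda>x. (x, x)) ` A"
    by (auto simp: Id_on_def)
  then have "card (Id_on A) = card A"
    by (simp add: card_image inj_on_def)
  moreover have "Id_on A \<subseteq> A \<times> A"
    by auto
  ultimately show ?thesis
    using assms by (simp add: card_Diff_subset card_cartesian_product diff_mult_distrib2 finite_subset)
qed

lemma connected_graph_if_reachable:
  assumes "\<And>x. x \<in> VT \<Longrightarrow> (\<lambda>a b. {a, b} \<in> ET)\<^sup>*\<^sup>* h x"
  shows "connected_graph VT ET"
proof -
  let ?R = "\<lambda>a b. {a, b} \<in> ET"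
  have "?R\<inverse>\<inverse> = ?R"
    by (auto simp: fun_eq_iff insert_commute)
  then have "?R\<^sup>*\<^sup>* x h" if "x \<in> VT" for x
    using rtranclp_converseI[OF assms[OF that]] by simp
  then show ?thesis
    unfolding connected_graph_def using assms by (meson rtranclp_trans)
qed

lemma mod_add_2_neq:
  fixes n x :: nat
  assumes "3 \<le> n"
  shows "(x + 2) mod n \<noteq> x mod n"
proof
  assume "(x + 2) mod n = x mod n"
  then have "n dvd 2"
    using mod_eq_dvd_iff_nat[of x "x + 2" n] by simp
  then have "n \<le> 2"
    by (rule dvd_imp_le) simp
  then show False
    using assms by simp
qed

lemma K2t_E_eq_image: "K2t_E t = (\<lambda>(i, j). {Inl i, Inr j}) ` ({..<2} \<times> {..<t})"
  by (auto simp: K2t_E_def)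

lemma finite_K2t_E: "finite (K2t_E t)"
  by (simp add: K2t_E_eq_image)

lemma Inl_Inr_in_K2t_E [simp]: "{Inl i, Inr j} \<in> K2t_E t \<longleftrightarrow> i < 2 \<and> j < t"
  by (auto simp: K2t_E_def doubleton_eq_iff)

lemma K2t_edge_at_leaf:
  assumes "is_S_tree (K2t_V t) (K2t_E t) S VT ET" "Inr j \<in> S" "y \<in> S" "y \<noteq> Inr j"
  obtains i where "i < 2" "{Inl i, Inr j} \<in> ET"
proof -
  have "(\<lambda>a b. {a, b} \<in> ET)\<^sup>*\<^sup>* (Inr j) y"
    using assms by (auto simp: is_S_tree_def is_tree_def connected_graph_def)
  then obtain z where z: "{Inr j, z} \<in> ET"
    using assms(4) by (cases rule: converse_rtranclpE) auto
  then have "{Inr j, z} \<in> K2t_E t"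
    using assms(1) by (auto simp: is_S_tree_def is_subgraph_def)
  then obtain i where "i < 2" "z = Inl i"
    by (auto simp: K2t_E_def doubleton_eq_iff)
  then show thesis
    using that z by (auto simp: insert_commute)
qed

lemma distinct_reps3_leaf_colors:
  assumes "three_rainbow_coloring (K2t_V t) (K2t_E t) c"
    and "i < t" "j < t" "l < t" "distinct [i, j, l]"
  shows "distinct_reps3 {c {Inl 0, Inr i}, c {Inl 1, Inr i}}
                        {c {Inl 0, Inr j}, c {Inl 1, Inr j}}
                        {c {Inl 0, Inr l}, c {Inl 1, Inr l}}"
proof -
  let ?S = "{Inr i, Inr j, Inr l} :: (nat + nat) set"
  have "?S \<subseteq> K2t_V t" "card ?S = 3"
    using assms(2-5) by (auto simp: K2t_V_def)
  then obtain VT ET where T: "is_S_tree (K2t_V t) (K2t_E t) ?S VT ET" and "inj_on c ET"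
    using assms(1) unfolding three_rainbow_coloring_def rainbow_def by blast
  obtain a where "a < 2" "{Inl a, Inr i} \<in> ET"
    using K2t_edge_at_leaf[OF T, of i "Inr j"] assms(5) by auto
  obtain b where "b < 2" "{Inl b, Inr j} \<in> ET"
    using K2t_edge_at_leaf[OF T, of j "Inr i"] assms(5) by auto
  obtain d where "d < 2" "{Inl d, Inr l} \<in> ET"
    using K2t_edge_at_leaf[OF T, of l "Inr i"] assms(5) by auto
  let ?es = "[{Inl a, Inr i}, {Inl b, Inr j}, {Inl d, Inr l}]"
  have "distinct ?es"
    using assms(5) by (auto simp: doubleton_eq_iff)
  moreover have "set ?es \<subseteq> ET"
    using \<open>{Inl a, Inr i} \<in> ET\<close> \<open>{Inl b, Inr j} \<in> ET\<close> \<open>{Inl d, Inr l} \<in> ET\<close> by simp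
  ultimately have "distinct (map c ?es)"
    using inj_on_subset[OF \<open>inj_on c ET\<close>] by (simp only: distinct_map)
  have color: "c {Inl x, Inr y} \<in> {c {Inl 0, Inr y}, c {Inl 1, Inr y}}" if "x < 2" for x y
    using that by (auto simp: less_2_cases_iff)
  show ?thesis
    unfolding distinct_reps3_def
  proof (intro bexI)
    show "distinct [c {Inl a, Inr i}, c {Inl b, Inr j}, c {Inl d, Inr l}]"
      using \<open>distinct (map c ?es)\<close> by simp
  qed (use color \<open>a < 2\<close> \<open>b < 2\<close> \<open>d < 2\<close> in blast)+
qed

lemma K2t_three_rainbow_coloring_card_bound:
  assumes "three_rainbow_coloring (K2t_V t) (K2t_E t) c" "3 \<le> t"
  shows "t \<le> card (c ` K2t_E t) * (card (c ` K2t_E t) - 1)"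
proof -
  have "{c {Inl 0, Inr j}, c {Inl 1, Inr j}} \<subseteq> c ` K2t_E t" if "j < t" for j
    using that by (auto intro: image_eqI[where x = "{_, _}"])
  moreover have "card {x, y} \<le> 2" for x y :: nat
    by (cases "x = y") auto
  ultimately have "card {..<t} \<le> card (c ` K2t_E t) * (card (c ` K2t_E t) - 1)"
    using distinct_reps3_leaf_colors[OF assms(1)] assms(2) finite_K2t_E
    by (intro card_le_if_distinct_reps3[where U = "\<lambda>j. {c {Inl 0, Inr j}, c {Inl 1, Inr j}}"])
      simp_all
  then show ?thesis
    by simp
qed

text \<open>On a cycle, the neighbours of a leaf are the two distinct hubs, and consecutive leaves
  of the cycle are two steps apart, hence distinct as the cycle has length at least 3.\<close>

lemma K2t_subgraph_no_cycle:
  assumes sub: "ET \<subseteq> K2t_E t"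
    and unique: "\<And>j j'. {Inl 0, Inr j} \<in> ET \<Longrightarrow> {Inl 1, Inr j} \<in> ET \<Longrightarrow>
                         {Inl 0, Inr j'} \<in> ET \<Longrightarrow> {Inl 1, Inr j'} \<in> ET \<Longrightarrow> j = j'"
  shows "\<not> has_cycle ET"
proof
  assume "has_cycle ET"
  then obtain vs where vs: "length vs \<ge> 3" "distinct vs"
    "\<forall>i < length vs. {vs ! i, vs ! ((i + 1) mod length vs)} \<in> ET"
    unfolding has_cycle_def by blast
  define n where "n = length vs"
  define w where "w q = vs ! (q mod n)" for q
  have n: "3 \<le> n"
    using vs(1) by (simp add: n_def)
  have mod_n: "q mod n < length vs" for q
    using n unfolding n_def by (intro mod_less_divisor) linarith
  have edge: "{w q, w (Suc q)} \<in> ET" for q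
    using vs(3)[rule_format, OF mod_n[of q]] by (simp add: w_def n_def mod_Suc_eq)
  have apart: "w q \<noteq> w (q + 2)" for q
    using nth_eq_iff_index_eq[OF vs(2) mod_n mod_n] mod_add_2_neq[OF n, of q]
    by (simp add: w_def)
  have K2t_edge: "\<exists>i j. i < 2 \<and> {w q, w (Suc q)} = {Inl i, Inr j}" for q
    using edge[of q] sub unfolding K2t_E_def by blast
  have Inl_Suc: "\<exists>i < 2. w (Suc q) = Inl i" if "w q = Inr j" for q j
    using K2t_edge[of q] that by (auto simp: doubleton_eq_iff)
  have Inr_Suc: "\<exists>j. w (Suc q) = Inr j" if "w q = Inl i" for q i
    using K2t_edge[of q] that by (auto simp: doubleton_eq_iff)
  have both_edges: "{Inl 0, Inr j} \<in> ET \<and> {Inl 1, Inr j} \<in> ET" if leaf: "w (Suc q) = Inr j" for q j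
  proof -
    obtain a where "a < 2" "w q = Inl a"
      using K2t_edge[of q] leaf by (auto simp: doubleton_eq_iff)
    moreover obtain b where "b < 2" "w (q + 2) = Inl b"
      using Inl_Suc[OF leaf] by auto
    ultimately have "{a, b} = {0, 1}"
      using apart[of q] by (auto simp: less_2_cases_iff)
    moreover have "{Inl a, Inr j} \<in> ET" "{Inl b, Inr j} \<in> ET"
      using edge[of q] edge[of "Suc q"] leaf \<open>w q = Inl a\<close> \<open>w (q + 2) = Inl b\<close>
      by (simp_all add: insert_commute)
    ultimately show ?thesis
      by (auto simp: doubleton_eq_iff)
  qed
  obtain q j where j: "w (Suc q) = Inr j"
    using Inl_Suc Inr_Suc by (metis sum.exhaust)
  then obtain j' where j': "w (Suc q + 2) = Inr j'"
    using Inl_Suc Inr_Suc by (metis add_2_eq_Suc')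
  have "j = j'"
    using unique both_edges[OF j] both_edges[of "Suc (Suc q)" j'] j' by simp
  then show False
    using apart[of "Suc q"] j j' by simp
qed

definition double_star :: "nat \<Rightarrow> nat set \<Rightarrow> (nat \<Rightarrow> nat) \<Rightarrow> (nat + nat) set set" where
  "double_star m J s =
     insert {Inl 0, Inr m} (insert {Inl 1, Inr m} ((\<lambda>j. {Inl (s j), Inr j}) ` J))"

lemma double_star_is_S_tree:
  assumes J: "J \<subseteq> {..<t}" and m: "m < t" "m \<notin> J" and s: "\<forall>j\<in>J. s j < 2"
    and S: "S \<subseteq> {Inl 0, Inl 1} \<union> Inr ` J"
  shows "is_S_tree (K2t_V t) (K2t_E t) S ({Inl 0, Inl 1, Inr m} \<union> Inr ` J) (double_star m J s)"
proof -
  let ?VT = "{Inl 0, Inl 1, Inr m} \<union> Inr ` J" and ?ET = "double_star m J s"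
  let ?R = "\<lambda>a b. {a, b} \<in> ?ET"
  have subgraph: "is_subgraph ?VT ?ET (K2t_V t) (K2t_E t)"
    using J m s by (auto simp: is_subgraph_def double_star_def K2t_V_def less_2_cases_iff)
  have to_m: "?R\<^sup>*\<^sup>* (Inl 0) (Inr m)" and to_1: "?R\<^sup>*\<^sup>* (Inl 0) (Inl 1)"
    by (auto simp: double_star_def insert_commute
        intro: rtranclp.rtrancl_into_rtrancl[where b = "Inr m"])
  have "?R\<^sup>*\<^sup>* (Inl 0) (Inr j)" if "j \<in> J" for j
  proof -
    have "?R\<^sup>*\<^sup>* (Inl 0) (Inl (s j))"
      using s that to_1 by (auto simp: less_2_cases_iff)
    moreover have "?R (Inl (s j)) (Inr j)"
      using that by (auto simp: double_star_def)
    ultimately show ?thesis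
      by (rule rtranclp.rtrancl_into_rtrancl)
  qed
  then have "connected_graph ?VT ?ET"
    using to_m to_1 by (intro connected_graph_if_reachable[where h = "Inl 0"]) auto
  moreover have "\<not> has_cycle ?ET"
  proof (rule K2t_subgraph_no_cycle)
    show "?ET \<subseteq> K2t_E t"
      using subgraph by (simp add: is_subgraph_def)
    have "j = m" if "{Inl 0, Inr j} \<in> ?ET" "{Inl 1, Inr j} \<in> ?ET" for j
      using that by (auto simp: double_star_def doubleton_eq_iff)
    then show "j = j'" if "{Inl 0, Inr j} \<in> ?ET" "{Inl 1, Inr j} \<in> ?ET"
      "{Inl 0, Inr j'} \<in> ?ET" "{Inl 1, Inr j'} \<in> ?ET" for j j'
      using that by metis
  qed
  ultimately show ?thesis
    using subgraph S by (auto simp: is_S_tree_def is_tree_def)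
qed

definition K2t_pair_coloring :: "(nat \<Rightarrow> nat \<times> nat) \<Rightarrow> (nat + nat) set \<Rightarrow> nat" where
  "K2t_pair_coloring g e =
     (let j = THE j. Inr j \<in> e in if Inl 0 \<in> e then fst (g j) else snd (g j))"

lemma K2t_pair_coloring_edge [simp]:
  "K2t_pair_coloring g {Inl i, Inr j} = (if i = 0 then fst (g j) else snd (g j))"
  by (simp add: K2t_pair_coloring_def)

lemma K2t_pair_coloring_image:
  "K2t_pair_coloring g ` K2t_E t = fst ` g ` {..<t} \<union> snd ` g ` {..<t}"
proof -
  have "K2t_E t = (\<lambda>j. {Inl 0, Inr j}) ` {..<t} \<union> (\<lambda>j. {Inl 1, Inr j}) ` {..<t}"
    by (auto simp: K2t_E_def less_2_cases_iff)
  then show ?thesis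
    by (simp add: image_Un image_image)
qed

lemma three_rainbow_coloring_K2t_pair_coloring:
  assumes inj: "inj_on g {..<t}" and proper: "\<forall>j<t. fst (g j) \<noteq> snd (g j)"
    and avoid: "\<And>X. finite X \<Longrightarrow> card X \<le> 3 \<Longrightarrow> \<exists>m<t. fst (g m) \<notin> X \<and> snd (g m) \<notin> X"
  shows "three_rainbow_coloring (K2t_V t) (K2t_E t) (K2t_pair_coloring g)"
  unfolding three_rainbow_coloring_def
proof (intro allI impI, elim conjE)
  fix S :: "(nat + nat) set"
  assume S: "S \<subseteq> K2t_V t" "card S = 3"
  let ?c = "K2t_pair_coloring g"
  define J where "J = {j. Inr j \<in> S}"
  have J: "J \<subseteq> {..<t}" "finite J"
    using S(1) by (auto simp: J_def K2t_V_def intro: finite_subset)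
  have "card J \<le> 3"
  proof -
    have "finite S"
      using S(2) by (intro card_ge_0_finite) simp
    have "card J = card (Inr ` J :: (nat + nat) set)"
      by (simp add: card_image)
    also have "\<dots> \<le> card S"
      using \<open>finite S\<close> by (intro card_mono) (auto simp: J_def)
    finally show ?thesis
      using S(2) by simp
  qed
  then obtain r where r: "\<forall>j\<in>J. r j \<in> {fst (g j), snd (g j)}" "inj_on r J"
    using obtain_injective_coordinate_choice[of J g] J inj_on_subset[OF inj] proper by blast
  obtain m where m: "m < t" "fst (g m) \<notin> r ` J" "snd (g m) \<notin> r ` J"
    using avoid[of "r ` J"] J(2) card_image_le[OF J(2), of r] \<open>card J \<le> 3\<close> by auto
  have "m \<notin> J"
    using r(1) m(2,3) by force
  define s where "s j = (if r j = fst (g j) then 0 else 1 :: nat)" for j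
  have s: "\<forall>j\<in>J. s j < 2"
    by (simp add: s_def)
  have color_s: "?c {Inl (s j), Inr j} = r j" if "j \<in> J" for j
    using r(1) that by (auto simp: s_def)
  let ?leaf_edges = "(\<lambda>j. {Inl (s j), Inr j}) ` J"
  have "inj_on ?c ?leaf_edges"
    using r(2) color_s by (intro inj_on_imageI) (simp add: inj_on_def)
  moreover have "?c ` ?leaf_edges = r ` J"
    using color_s by (simp add: image_image cong: image_cong)
  moreover have "?c {Inl 0, Inr m} \<noteq> ?c {Inl 1, Inr m}"
    using proper m(1) by simp
  ultimately have "rainbow ?c (double_star m J s)"
    unfolding rainbow_def double_star_def inj_on_insert using m(2,3) by auto
  moreover have "S \<subseteq> {Inl 0, Inl 1} \<union> Inr ` J"
    using S(1) by (auto simp: J_def K2t_V_def)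
  ultimately show "\<exists>VT ET. is_S_tree (K2t_V t) (K2t_E t) S VT ET \<and> rainbow ?c ET"
    using double_star_is_S_tree[OF J(1) m(1) \<open>m \<notin> J\<close> s] by blast
qed

lemma obtain_pair_set_between:
  fixes k t :: nat
  assumes "2 \<le> k" "(k - 1) * (k - 2) + 1 \<le> t" "t \<le> k * (k - 1)"
  obtains P where "insert (0, 1) ({1..<k} \<times> {1..<k} - Id_on {1..<k}) \<subseteq> P"
    "P \<subseteq> {..<k} \<times> {..<k} - Id_on {..<k}" "card P = t"
proof -
  let ?A = "insert (0, 1) ({1..<k} \<times> {1..<k} - Id_on {1..<k})"
  let ?C = "{..<k} \<times> {..<k} - Id_on {..<k}"
  have "card ?A = (k - 1) * (k - 2) + 1"
    using card_Times_minus_Id_on[of "{1..<k}"] by (simp add: numeral_2_eq_2)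
  moreover have "card ?C = k * (k - 1)"
    using card_Times_minus_Id_on[of "{..<k}"] by simp
  moreover have "?A \<subseteq> ?C"
    using assms(1) by auto
  ultimately show thesis
    using exists_subset_between[of ?A t ?C] assms that by auto
qed

lemma fst_snd_image_pair_set:
  fixes k :: nat
  assumes "3 \<le> k" "insert (0, 1) ({1..<k} \<times> {1..<k} - Id_on {1..<k}) \<subseteq> P"
    "P \<subseteq> {..<k} \<times> {..<k} - Id_on {..<k}"
  shows "fst ` P \<union> snd ` P = {..<k}"
proof
  show "fst ` P \<union> snd ` P \<subseteq> {..<k}"
    using assms(3) by auto
  have "x \<in> fst ` P" if "x < k" for x
  proof (cases "x = 0")
    case True
    then show ?thesis
      using assms(2) by force
  next
    case False
    then have "(x, if x = 1 then 2 else 1) \<in> P"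
      using assms(1,2) that by auto
    then show ?thesis
      by force
  qed
  then show "{..<k} \<subseteq> fst ` P \<union> snd ` P"
    by auto
qed

lemma obtain_pair_avoiding:
  fixes k :: nat
  assumes "6 \<le> k" "finite X" "card X \<le> 3"
  obtains y z where "(y, z) \<in> {1..<k} \<times> {1..<k} - Id_on {1..<k}" "y \<notin> X" "z \<notin> X"
proof -
  have "2 \<le> card ({1..5} - X)"
    using diff_card_le_card_Diff[OF assms(2), of "{1..5}"] assms(3) by simp
  then obtain T where "T \<subseteq> {1..5} - X" "card T = 2"
    by (meson obtain_subset_with_card_n)
  then obtain y z where "y \<in> {1..5} - X" "z \<in> {1..5} - X" "y \<noteq> z"
    by (metis card_2_iff insert_subset)
  moreover from this have "(y, z) \<in> {1..<k} \<times> {1..<k} - Id_on {1..<k}"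
    using assms(1) by (auto simp: Id_on_def)
  ultimately show thesis
    using that by blast
qed

lemma K2t_three_rainbow_coloring_with_k_colors:
  fixes k t :: nat
  assumes "6 \<le> k" "(k - 1) * (k - 2) + 1 \<le> t" "t \<le> k * (k - 1)"
  shows "\<exists>c. three_rainbow_coloring (K2t_V t) (K2t_E t) c \<and> card (c ` K2t_E t) = k"
proof -
  have "2 \<le> k"
    using assms(1) by simp
  then obtain P where P: "insert (0, 1) ({1..<k} \<times> {1..<k} - Id_on {1..<k}) \<subseteq> P"
    "P \<subseteq> {..<k} \<times> {..<k} - Id_on {..<k}" "card P = t"
    using obtain_pair_set_between assms(2,3) by blast
  have "finite P"
    using P(2) finite_subset by blast
  then obtain g where g: "bij_betw g {..<t} P"
    using ex_bij_betw_nat_finite[of P] P(3) by (auto simp: atLeast0LessThan)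
  have g_image: "g ` {..<t} = P"
    using g by (simp add: bij_betw_def)
  have "three_rainbow_coloring (K2t_V t) (K2t_E t) (K2t_pair_coloring g)"
  proof (rule three_rainbow_coloring_K2t_pair_coloring)
    show "inj_on g {..<t}"
      using g by (simp add: bij_betw_def)
    show "\<forall>j<t. fst (g j) \<noteq> snd (g j)"
    proof (intro allI impI)
      fix j assume "j < t"
      then have "g j \<in> P"
        using bij_betw_apply[OF g] by simp
      then have "g j \<in> {..<k} \<times> {..<k} - Id_on {..<k}"
        using P(2) by (rule subsetD[rotated])
      then show "fst (g j) \<noteq> snd (g j)"
        by (cases "g j") (auto simp: Id_on_iff)
    qed
    fix X :: "nat set"
    assume "finite X" "card X \<le> 3"
    then obtain y z where yz: "(y, z) \<in> {1..<k} \<times> {1..<k} - Id_on {1..<k}" "y \<notin> X" "z \<notin> X"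
      using obtain_pair_avoiding[OF assms(1)] by blast
    then have "(y, z) \<in> P"
      using P(1) by blast
    then obtain m where "m < t" "g m = (y, z)"
      using g_image by (metis imageE lessThan_iff)
    then show "\<exists>m<t. fst (g m) \<notin> X \<and> snd (g m) \<notin> X"
      using yz by auto
  qed
  moreover have "fst ` P \<union> snd ` P = {..<k}"
    using fst_snd_image_pair_set P(1,2) assms(1) by simp
  ultimately show ?thesis
    using g_image by (intro exI[of _ "K2t_pair_coloring g"]) (simp add: K2t_pair_coloring_image)
qed

theorem lemma6:
  fixes k t :: nat
  assumes "k \<ge> 6"
    and "(k - 1) * (k - 2) + 1 \<le> t"
    and "t \<le> k * (k - 1)"
  shows "rx3 (K2t_V t) (K2t_E t) = k"
  unfolding rx3_def
proof (rule Least_equality)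
  show "\<exists>c. three_rainbow_coloring (K2t_V t) (K2t_E t) c \<and> card (c ` K2t_E t) = k"
    using K2t_three_rainbow_coloring_with_k_colors[OF assms] .
next
  fix n
  assume "\<exists>c. three_rainbow_coloring (K2t_V t) (K2t_E t) c \<and> card (c ` K2t_E t) = n"
  then obtain c where c: "three_rainbow_coloring (K2t_V t) (K2t_E t) c" "card (c ` K2t_E t) = n"
    by blast
  have "5 * 4 \<le> (k - 1) * (k - 2)"
    using assms(1) by (intro mult_le_mono) auto
  then have "t \<le> n * (n - 1)"
    using K2t_three_rainbow_coloring_card_bound[OF c(1)] c(2) assms(2) by simp
  show "k \<le> n"
  proof (rule ccontr)
    assume "\<not> k \<le> n"
    then have "n * (n - 1) \<le> (k - 1) * (k - 2)"
      by (intro mult_le_mono) auto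
    then show False
      using \<open>t \<le> n * (n - 1)\<close> assms(2) by simp
  qed
qed

end
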